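(* Let $TS=(S,\to,T,s_0)$ be the labelled transition system with states $S=\{s_0,s_1,s_2,s_3,s_4,s_5,s_6\}$, labels $T=\{a,b,c,d\}$, initial state $s_0$, and exactly the following ten arcs: $s_0\xrightarrow{a}s_1$, $s_0\xrightarrow{b}s_2$, $s_1\xrightarrow{b}s_3$, $s_2\xrightarrow{a}s_3$, $s_3\xrightarrow{c}s_4$, $s_4\xrightarrow{a}s_5$, $s_4\xrightarrow{d}s_0$, $s_5\xrightarrow{b}s_6$, $s_5\xrightarrow{d}s_1$, $s_6\xrightarrow{d}s_3$. Then there is no safe (i.e. $1$-bounded) Petri net with transition set $\{a,b,c,d\}$ that solves $TS$. More precisely, in every Petri net $N$ with transition set $\{a,b,c,d\}$ solving $TS$, if $M_4$ denotes the reachable marking corresponding to $s_4$, there is a place $p$ with $M_4(p)<F(p,b)$, and every such place $p$ carries at least $2$ tokens in the marking reached from $M_4$ by firing $ad$.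
   Context: A Petri net is a tuple $N=(P,T,F,M_0)$ with finite disjoint sets $P$ (places) and $T$ (transitions), a flow function $F\colon (P\times T)\cup(T\times P)\to\mathbb{N}$, and an initial marking $M_0\colon P\to\mathbb{N}$. A transition $t$ is enabled at a marking $M$ if $M(p)\ge F(p,t)$ for all $p\in P$; firing it yields $M'$ with $M'(p)=M(p)-F(p,t)+F(t,p)$. The reachability graph of $N$ is the labelled transition system whose states are the markings reachable from $M_0$, with initial state $M_0$ and arcs $(M,t,M')$ whenever $M$ is reachable and $t$ fires from $M$ to $M'$. $N$ solves a labelled transition system $TS$ (with label set equal to $T$) if its reachability graph is isomorphic to $TS$, i.e. there is a bijection between states mapping initial state to initial state and preserving and reflecting labelled arcs. $N$ is $k$-bounded if $M(p)\le k$ for every reachable marking $M$ and every place $p$; safe means $1$-bounded. *)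

theory Defs
  imports Main
begin

datatype lab = a | b | c | d

datatype st = s0 | s1 | s2 | s3 | s4 | s5 | s6

fun ts_arc :: "st \<Rightarrow> lab \<Rightarrow> st \<Rightarrow> bool" where
  "ts_arc x l y \<longleftrightarrow>
     (x, l, y) \<in> {(s0, a, s1), (s0, b, s2), (s1, b, s3), (s2, a, s3), (s3, c, s4),
                   (s4, a, s5), (s4, d, s0), (s5, b, s6), (s5, d, s1), (s6, d, s3)}"

text \<open>A Petri net with finite place type 'p and transition set lab is given by
  pre p t = F(p,t), post t p = F(t,p), and an initial marking M0.\<close>

definition enabled :: "('p \<Rightarrow> lab \<Rightarrow> nat) \<Rightarrow> ('p \<Rightarrow> nat) \<Rightarrow> lab \<Rightarrow> bool" where
  "enabled pre M t \<longleftrightarrow> (\<forall>p. pre p t \<le> M p)"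

definition fire :: "('p \<Rightarrow> lab \<Rightarrow> nat) \<Rightarrow> (lab \<Rightarrow> 'p \<Rightarrow> nat) \<Rightarrow> ('p \<Rightarrow> nat) \<Rightarrow> lab \<Rightarrow> ('p \<Rightarrow> nat)" where
  "fire pre post M t = (\<lambda>p. M p - pre p t + post t p)"

inductive reachable :: "('p \<Rightarrow> lab \<Rightarrow> nat) \<Rightarrow> (lab \<Rightarrow> 'p \<Rightarrow> nat) \<Rightarrow> ('p \<Rightarrow> nat) \<Rightarrow> ('p \<Rightarrow> nat) \<Rightarrow> bool"
  for pre post M0 where
  init: "reachable pre post M0 M0"
| step: "reachable pre post M0 M \<Longrightarrow> enabled pre M t \<Longrightarrow> reachable pre post M0 (fire pre post M t)"

definition is_iso :: "('p \<Rightarrow> lab \<Rightarrow> nat) \<Rightarrow> (lab \<Rightarrow> 'p \<Rightarrow> nat) \<Rightarrow> ('p \<Rightarrow> nat) \<Rightarrow> (st \<Rightarrow> ('p \<Rightarrow> nat)) \<Rightarrow> bool" where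
  "is_iso pre post M0 f \<longleftrightarrow>
     bij_betw f UNIV {M. reachable pre post M0 M} \<and> f s0 = M0 \<and>
     (\<forall>x l y. ts_arc x l y \<longleftrightarrow> (enabled pre (f x) l \<and> fire pre post (f x) l = f y))"

definition solves :: "('p \<Rightarrow> lab \<Rightarrow> nat) \<Rightarrow> (lab \<Rightarrow> 'p \<Rightarrow> nat) \<Rightarrow> ('p \<Rightarrow> nat) \<Rightarrow> bool" where
  "solves pre post M0 \<longleftrightarrow> (\<exists>f. is_iso pre post M0 f)"

definition k_bounded :: "nat \<Rightarrow> ('p \<Rightarrow> lab \<Rightarrow> nat) \<Rightarrow> (lab \<Rightarrow> 'p \<Rightarrow> nat) \<Rightarrow> ('p \<Rightarrow> nat) \<Rightarrow> bool" where
  "k_bounded k pre post M0 \<longleftrightarrow> (\<forall>M. reachable pre post M0 M \<longrightarrow> (\<forall>p. M p \<le> k))"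

abbreviation safe :: "('p \<Rightarrow> lab \<Rightarrow> nat) \<Rightarrow> (lab \<Rightarrow> 'p \<Rightarrow> nat) \<Rightarrow> ('p \<Rightarrow> nat) \<Rightarrow> bool" where
  "safe pre post M0 \<equiv> k_bounded 1 pre post M0"

end

theory Submission
  imports Defs
begin

text \<open>At \<open>s\<^sub>4\<close> the transition \<open>b\<close> is disabled, so some place \<open>p\<close> has \<open>M\<^sub>4(p) < F(p,b)\<close>.
  Firing \<open>a\<close> at \<open>s\<^sub>4\<close> reaches \<open>s\<^sub>5\<close>, where \<open>b\<close> is enabled again; hence \<open>a\<close> strictly increases
  the token count on \<open>p\<close>. Since \<open>b\<close> is also enabled at \<open>s\<^sub>0\<close>, firing \<open>a\<close> there puts at
  least \<open>F(p,b) + 1 \<ge> 2\<close> tokens on \<open>p\<close> in \<open>s\<^sub>1\<close>, which is also the marking reached from \<open>s\<^sub>4\<close>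
  by \<open>ad\<close>. As \<open>s\<^sub>1\<close> is reachable, the net is not safe.\<close>

lemma fire_add_pre:
  assumes "enabled pre M t"
  shows "fire pre post M t p + pre p t = M p + post t p"
  using assms unfolding enabled_def fire_def by (metis le_add_diff_inverse2 add.commute add.assoc)

lemma two_le_fire_if_fire_reenables:
  assumes "enabled pre M t" and "enabled pre M' t"
    and "pre p u \<le> M p"
    and "M' p < pre p u" and "pre p u \<le> fire pre post M' t p"
  shows "2 \<le> fire pre post M t p"
  using fire_add_pre[OF assms(1), of post p] fire_add_pre[OF assms(2), of post p] assms(3-5)
  by linarith

lemma is_iso_arc:
  assumes "is_iso pre post M0 f" and "ts_arc x l y"
  shows "enabled pre (f x) l" and "fire pre post (f x) l = f y"
  using assms unfolding is_iso_def by blast+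

lemma is_iso_reachable:
  assumes "is_iso pre post M0 f"
  shows "reachable pre post M0 (f x)"
  using assms bij_betw_apply unfolding is_iso_def by fastforce

lemma is_iso_not_enabled:
  assumes iso: "is_iso pre post M0 f" and no_arc: "\<And>y. \<not> ts_arc x l y"
  shows "\<not> enabled pre (f x) l"
proof
  assume en: "enabled pre (f x) l"
  with iso have "reachable pre post M0 (fire pre post (f x) l)"
    by (blast intro: reachable.step is_iso_reachable)
  then obtain y where "fire pre post (f x) l = f y"
    using iso unfolding is_iso_def bij_betw_def by blast
  with iso en have "ts_arc x l y" unfolding is_iso_def by blast
  with no_arc show False by blast
qed

lemma is_iso_fire_ad_s4:
  assumes "is_iso pre post M0 f"
  shows "fire pre post (fire pre post (f s4) a) d = f s1"
  using is_iso_arc(2)[OF assms, of s4 a s5] is_iso_arc(2)[OF assms, of s5 d s1] by simp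

lemma is_iso_two_le_s1_at_b_blocking_place:
  assumes iso: "is_iso pre post M0 f" and p: "f s4 p < pre p b"
  shows "2 \<le> f s1 p"
proof -
  have "pre p b \<le> f s0 p"
    using is_iso_arc(1)[OF iso, of s0 b s2] unfolding enabled_def by simp
  moreover have "pre p b \<le> fire pre post (f s4) a p"
    using is_iso_arc[OF iso, of s4 a s5] is_iso_arc(1)[OF iso, of s5 b s6]
    unfolding enabled_def by simp
  ultimately have "2 \<le> fire pre post (f s0) a p"
    using two_le_fire_if_fire_reenables is_iso_arc(1)[OF iso, of s0 a s1]
      is_iso_arc(1)[OF iso, of s4 a s5] p by simp
  then show ?thesis using is_iso_arc(2)[OF iso, of s0 a s1] by simp
qed

theorem mainTheorem1:
  fixes pre :: "'p::finite \<Rightarrow> lab \<Rightarrow> nat"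
    and post :: "lab \<Rightarrow> 'p \<Rightarrow> nat"
    and M0 :: "'p \<Rightarrow> nat"
  assumes "solves pre post M0"
  shows "\<not> safe pre post M0 \<and>
         (\<forall>f. is_iso pre post M0 f \<longrightarrow>
              (\<exists>p. f s4 p < pre p b) \<and>
              (\<forall>p. f s4 p < pre p b \<longrightarrow>
                   2 \<le> fire pre post (fire pre post (f s4) a) d p))"
proof -
  have place: "(\<exists>p. f s4 p < pre p b) \<and>
      (\<forall>p. f s4 p < pre p b \<longrightarrow> 2 \<le> fire pre post (fire pre post (f s4) a) d p)"
    if iso: "is_iso pre post M0 f" for f
  proof -
    have "\<not> enabled pre (f s4) b" using is_iso_not_enabled[OF iso] by simp
    then show ?thesis
      using is_iso_two_le_s1_at_b_blocking_place[OF iso] is_iso_fire_ad_s4[OF iso]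
      unfolding enabled_def by (simp add: not_le)
  qed
  obtain f where iso: "is_iso pre post M0 f" using assms unfolding solves_def by blast
  then obtain p where "f s4 p < pre p b" using place by blast
  then have "2 \<le> f s1 p" using is_iso_two_le_s1_at_b_blocking_place[OF iso] by blast
  then have "\<not> safe pre post M0"
    using is_iso_reachable[OF iso, of s1] unfolding k_bounded_def by (metis one_add_one not_less_eq_eq Suc_eq_plus1)
  with place show ?thesis by blast
qed

end
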